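(* For all integers $n\ge 1$ and nonnegative integers $a,b$, $$\det\left[\binom{2i+2a}{j+b}\right]_{i,j=0}^{n-1}=2^{\binom{n}{2}}\prod_{i=0}^{n-1}\frac{(2i+2a)!\,i!}{(i+b)!\,(2i+2a-b)!}=2^{\binom{n}{2}}\prod_{i=0}^{n-1}\binom{2i+2a}{b}\binom{i+b}{b}^{-1}.$$ In particular, $\det\left[\binom{2i}{j}\right]_{i,j=0}^{n-1}=2^{\binom n2}$.
   Context: Binomial coefficients follow the convention $\binom{m}{k}=0$ if $k<0$ or $k>m$ (in the middle expression, a term with $2i+2a<b$ is interpreted as $0$, consistent with the rightmost expression). *)

theory Defs
  imports Complex_Main "Jordan_Normal_Form.Determinant"
begin

text \<open>Middle factor of the product formula; by convention it is 0 when 2i+2a < b.\<close>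
definition mid_factor :: "nat \<Rightarrow> nat \<Rightarrow> nat \<Rightarrow> real" where
  "mid_factor a b i = (if b \<le> 2*i + 2*a
     then (fact (2*i + 2*a) * fact i) / (fact (i + b) * fact (2*i + 2*a - b))
     else 0)"

end

theory Submission imports Defs begin

(*
  Every entry factors through a falling factorial,
      C(x, j+b) = C(x, b) * (x - b)^{(j)} * b! / (j+b)!,   y^{(j)} = y (y-1) ... (y-j+1),
  so after pulling the row factors C(x_i, b) and the column factors b!/(j+b)! out of
  the determinant only the falling-factorial Vandermonde determinant
      det [y_i^{(j)}] = prod_{i<k} (y_k - y_i)
  remains.  It is proved by induction on the size: one column operation turns the
  last row into (1, 0, ..., 0), and Laplace expansion along it leaves a diagonal
  matrix times the smaller determinant.  For x_i = 2i + 2a the differences are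
  2(k - i), so the Vandermonde product is 2^C(n,2) * prod_k k!; collecting the
  factorials gives both product formulas, and a = b = 0 gives det [C(2i, j)] = 2^C(n,2).
*)

definition falling_factorial :: "'a::comm_ring_1 \<Rightarrow> nat \<Rightarrow> 'a" where
  "falling_factorial y j = (\<Prod>l=0..<j. y - of_nat l)"

lemma falling_factorial_Suc:
  "falling_factorial y (Suc j) = falling_factorial y j * (y - of_nat j)"
  by (simp add: falling_factorial_def)

lemma falling_factorial_of_nat: "falling_factorial (real m) j = fact j * real (m choose j)"
  unfolding falling_factorial_def binomial_gbinomial gbinomial_mult_fact by simp

lemma det_mat_diag: "det (mat_diag n f) = (\<Prod>i<n. f i)"
proof -
  have "upper_triangular (mat_diag n f)" by (auto simp: upper_triangular_def mat_diag_def)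
  then have "det (mat_diag n f) = prod_list (diag_mat (mat_diag n f))"
    by (metis det_upper_triangular mat_diag_dim)
  also have "\<dots> = (\<Prod>i<n. f i)" unfolding prod_list_diag_prod
    by (simp add: mat_diag_def atLeast0LessThan)
  finally show ?thesis .
qed

lemma det_unit_upper_triangular:
  assumes "\<And>i j. j < i \<Longrightarrow> i < n \<Longrightarrow> g i j = 0" and "\<And>i. i < n \<Longrightarrow> g i i = 1"
  shows "det (mat n n (\<lambda>(i, j). g i j)) = (1 :: 'a :: comm_ring_1)"
proof -
  have "upper_triangular (mat n n (\<lambda>(i, j). g i j))"
    using assms(1) by (auto simp: upper_triangular_def)
  then have "det (mat n n (\<lambda>(i, j). g i j)) = prod_list (diag_mat (mat n n (\<lambda>(i, j). g i j)))"
    by (rule det_upper_triangular[where n = n]) simp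
  also have "\<dots> = 1" unfolding prod_list_diag_prod using assms(2) by simp
  finally show ?thesis .
qed

lemma det_scale_rows_cols:
  fixes d e :: "nat \<Rightarrow> 'a :: comm_ring_1"
  shows "det (mat n n (\<lambda>(i, j). d i * f i j * e j))
       = (\<Prod>i<n. d i * e i) * det (mat n n (\<lambda>(i, j). f i j))"
proof -
  define F where "F = mat n n (\<lambda>(i, j). f i j)"
  have F: "F \<in> carrier_mat n n" by (simp add: F_def)
  have DF: "mat_diag n d * F \<in> carrier_mat n n" by (metis F mat_diag_dim mult_carrier_mat)
  have "mat n n (\<lambda>(i, j). d i * f i j * e j) = mat_diag n d * F * mat_diag n e"
    by (subst mat_diag_mult_left[OF F], subst mat_diag_mult_right[of _ n])
       (auto simp: F_def)
  also have "det \<dots> = det (mat_diag n d) * det F * det (mat_diag n e)"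
    by (simp add: det_mult[OF DF] det_mult[OF _ F])
  finally show ?thesis by (simp add: F_def det_mat_diag prod.distrib)
qed

text \<open>
  The column operation of the induction step: subtracting (c - k) times column k
  from column k+1 of [y_i^{(j)}] gives the columns (y_i - c) y_i^{(k)}, shifted by one.
\<close>
lemma falling_factorial_column_reduction:
  fixes y :: "nat \<Rightarrow> 'a :: comm_ring_1"
  shows "mat m m (\<lambda>(i, j). falling_factorial (y i) j)
         * mat m m (\<lambda>(l, k). (if l = k then 1 else 0) - (if k = Suc l then c - of_nat l else 0))
       = mat m m (\<lambda>(i, k). if k = 0 then 1 else (y i - c) * falling_factorial (y i) (k - 1))"
    (is "?F * ?L = ?M")
proof (rule eq_matI)
  fix i k assume i: "i < dim_row ?M" and k: "k < dim_col ?M"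
  let ?f = "falling_factorial (y i)"
  have "(?F * ?L) $$ (i, k) = (\<Sum>l<m. ?f l * ((if l = k then 1 else 0)
        - (if k = Suc l then c - of_nat l else 0)))"
    using i k by (simp add: scalar_prod_def atLeast0LessThan)
  also have "\<dots> = (\<Sum>l<m. if l = k then ?f l else 0)
        - (\<Sum>l<m. if k = Suc l then ?f l * (c - of_nat l) else 0)"
    unfolding sum_subtractf[symmetric] by (intro sum.cong) (auto simp: right_diff_distrib)
  also have "\<dots> = ?M $$ (i, k)"
  proof (cases k)
    case 0
    then show ?thesis using i k by (simp add: falling_factorial_def)
  next
    case (Suc k')
    have "(\<Sum>l<m. if k = Suc l then ?f l * (c - of_nat l) else 0)
         = (\<Sum>l<m. if l = k' then ?f l * (c - of_nat l) else 0)"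
      using Suc by (intro sum.cong) auto
    moreover have "?f k - ?f k' * (c - of_nat k') = (y i - c) * ?f k'"
      using Suc by (simp add: falling_factorial_Suc algebra_simps)
    ultimately show ?thesis using Suc i k by simp
  qed
  finally show "(?F * ?L) $$ (i, k) = ?M $$ (i, k)" .
qed auto

lemma neg_one_power_prod:
  "(-1 :: 'a :: comm_ring_1) ^ m * (\<Prod>i<m. y i - c) = (\<Prod>i<m. c - y i)"
  by (induction m) (auto simp: algebra_simps)

theorem det_falling_factorial_vandermonde:
  fixes y :: "nat \<Rightarrow> 'a :: comm_ring_1"
  shows "det (mat n n (\<lambda>(i, j). falling_factorial (y i) j)) = (\<Prod>k<n. \<Prod>i<k. y k - y i)"
proof (induction n)
  case 0
  then show ?case by (simp add: det_def')
next
  case (Suc n)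
  define L where "L = mat (Suc n) (Suc n)
     (\<lambda>(l, k). (if l = k then 1 else 0) - (if k = Suc l then y n - of_nat l else 0))"
  define M where "M = mat (Suc n) (Suc n)
     (\<lambda>(i, k). if k = 0 then 1 else (y i - y n) * falling_factorial (y i) (k - 1))"
  have M: "M \<in> carrier_mat (Suc n) (Suc n)" by (simp add: M_def)
  have "det L = 1" unfolding L_def by (rule det_unit_upper_triangular) auto
  then have "det (mat (Suc n) (Suc n) (\<lambda>(i, j). falling_factorial (y i) j)) = det M"
    using falling_factorial_column_reduction[of "Suc n" y "y n"]
    by (metis (no_types, lifting) L_def M_def det_mult mat_carrier mult.right_neutral)
  also have "det M = (\<Sum>j<Suc n. M $$ (n, j) * cofactor M n j)"
    by (rule laplace_expansion_row[OF M]) simp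
  text \<open>The last row of M is (1, 0, ..., 0).\<close>
  also have "\<dots> = (-1) ^ n * det (mat_delete M n 0)"
    by (simp add: M_def cofactor_def lessThan_Suc_eq_insert_0 sum.reindex)
  also have "mat_delete M n 0
      = mat_diag n (\<lambda>i. y i - y n) * mat n n (\<lambda>(i, j). falling_factorial (y i) j)"
    by (subst mat_diag_mult_left[of _ n n]) (auto simp: mat_delete_def M_def)
  also have "det \<dots> = (\<Prod>i<n. y i - y n) * (\<Prod>k<n. \<Prod>i<k. y k - y i)"
    by (subst det_mult[of _ n]) (auto simp: det_mat_diag Suc.IH)
  finally show ?case
    by (simp add: neg_one_power_prod mult.assoc[symmetric] mult.commute)
qed

lemma binomial_shift_factorization:
  "real (x choose (j + b)) = real (x choose b) * falling_factorial (real x - real b) j * (fact b / fact (j + b))"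
proof (cases "b \<le> x \<and> j + b \<le> x")
  case True
  then have shift: "real x - real b = real (x - b)" by simp
  have "(x choose (j + b)) * ((j + b) choose b) = (x choose b) * ((x - b) choose j)"
    using choose_mult[of b "j + b" x] True by simp
  then have "real (x choose (j + b)) * (fact (j + b) / (fact b * fact j))
           = real (x choose b) * real ((x - b) choose j)"
    by (metis binomial_fact le_add2 add_diff_cancel_right' of_nat_mult)
  then show ?thesis unfolding shift falling_factorial_of_nat by (simp add: field_simps)
next
  case False
  show ?thesis
  proof (cases "b \<le> x")
    case True
    with False have "x - b < j" "x < j + b" by auto
    moreover have "real x - real b = real (x - b)" using True by simp
    ultimately show ?thesis
      by (simp only: falling_factorial_of_nat binomial_eq_0 of_nat_0 mult_zero_left mult_zero_right)
  qed (simp add: binomial_eq_0)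
qed

theorem det_shifted_binomial:
  fixes x :: "nat \<Rightarrow> nat"
  shows "det (mat n n (\<lambda>(i, j). real (x i choose (j + b))))
       = (\<Prod>i<n. real (x i choose b) * (fact b / fact (i + b)))
         * (\<Prod>k<n. \<Prod>i<k. real (x k) - real (x i))"
proof -
  let ?y = "\<lambda>i. real (x i) - real b"
  have "mat n n (\<lambda>(i, j). real (x i choose (j + b)))
      = mat n n (\<lambda>(i, j). real (x i choose b)
          * falling_factorial (?y i) j * (fact b / fact (j + b)))"
    by (simp only: binomial_shift_factorization)
  also have "det \<dots> = (\<Prod>i<n. real (x i choose b) * (fact b / fact (i + b)))
      * det (mat n n (\<lambda>(i, j). falling_factorial (?y i) j))"
    by (rule det_scale_rows_cols)
  also have "det (mat n n (\<lambda>(i, j). falling_factorial (?y i) j)) = (\<Prod>k<n. \<Prod>i<k. ?y k - ?y i)"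
    by (rule det_falling_factorial_vandermonde)
  also have "\<dots> = (\<Prod>k<n. \<Prod>i<k. real (x k) - real (x i))"
    by simp
  finally show ?thesis .
qed

lemma prod_even_differences:
  "(\<Prod>k<n. \<Prod>i<k. real (2*k + 2*a) - real (2*i + 2*a)) = 2 ^ (n choose 2) * (\<Prod>k<n. fact k)"
proof -
  have "(\<Prod>i<k. real (2*k + 2*a) - real (2*i + 2*a)) = 2 ^ k * fact k" for k
  proof -
    have "(\<Prod>i<k. k - i) = fact k"
      by (simp add: fact_prod_rev atLeast0LessThan)
    then have fact_k: "(\<Prod>i<k. real (k - i)) = fact k"
      by (metis of_nat_prod of_nat_fact)
    have "(\<Prod>i<k. real (2*k + 2*a) - real (2*i + 2*a)) = (\<Prod>i<k. 2 * real (k - i))"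
      by (intro prod.cong) (simp_all add: of_nat_diff)
    also have "\<dots> = 2 ^ k * (\<Prod>i<k. real (k - i))"
      by (simp only: prod.distrib prod_constant card_lessThan)
    finally show ?thesis by (simp only: fact_k)
  qed
  moreover have "(\<Prod>k<n. 2 ^ k :: real) = 2 ^ (n choose 2)"
  proof -
    have "(\<Sum>k<n. k) = n choose 2"
      by (induction n) (auto simp: numeral_2_eq_2)
    then show ?thesis using power_sum[of "2 :: real" "\<lambda>k. k" "{..<n}"] by simp
  qed
  ultimately show ?thesis by (simp add: prod.distrib)
qed

lemma mid_factor_eq:
  "real ((2*i + 2*a) choose b) * (fact b / fact (i + b)) * fact i = mid_factor a b i"
  "mid_factor a b i = real ((2*i + 2*a) choose b) * inverse (real ((i + b) choose b))"
proof -
  show "real ((2*i + 2*a) choose b) * (fact b / fact (i + b)) * fact i = mid_factor a b i"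
    by (cases "b \<le> 2*i + 2*a") (simp_all add: mid_factor_def binomial_fact)
  show "mid_factor a b i = real ((2*i + 2*a) choose b) * inverse (real ((i + b) choose b))"
    by (cases "b \<le> 2*i + 2*a") (simp_all add: mid_factor_def binomial_fact binomial_eq_0)
qed

lemma det_binomial_even_rows:
  "det (mat n n (\<lambda>(i, j). real ((2*i + 2*a) choose (j + b))))
     = 2 ^ (n choose 2) * (\<Prod>i<n. mid_factor a b i)"
proof -
  have "det (mat n n (\<lambda>(i, j). real ((2*i + 2*a) choose (j + b))))
      = (\<Prod>i<n. real ((2*i + 2*a) choose b) * (fact b / fact (i + b)))
        * (2 ^ (n choose 2) * (\<Prod>i<n. fact i))"
    using det_shifted_binomial[of n "\<lambda>i. 2*i + 2*a" b] by (simp only: prod_even_differences)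
  also have "\<dots> = 2 ^ (n choose 2)
      * (\<Prod>i<n. real ((2*i + 2*a) choose b) * (fact b / fact (i + b)) * fact i)"
    by (simp only: mult.left_commute[of _ "2 ^ (n choose 2)"] prod.distrib[symmetric])
  finally show ?thesis by (simp only: mid_factor_eq(1))
qed

theorem mainTheorem1:
  fixes n a b :: nat
  assumes "n \<ge> 1"
  shows "det (mat n n (\<lambda>(i, j). real ((2*i + 2*a) choose (j + b))))
           = 2 ^ (n choose 2) * (\<Prod>i<n. mid_factor a b i)
       \<and> det (mat n n (\<lambda>(i, j). real ((2*i + 2*a) choose (j + b))))
           = 2 ^ (n choose 2) * (\<Prod>i<n. real ((2*i + 2*a) choose b) * inverse (real ((i + b) choose b)))
       \<and> det (mat n n (\<lambda>(i, j). real ((2*i) choose j))) = 2 ^ (n choose 2)"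
proof -
  note first_form = det_binomial_even_rows[of n a b]
  then have second_form:
    "det (mat n n (\<lambda>(i, j). real ((2*i + 2*a) choose (j + b))))
       = 2 ^ (n choose 2) * (\<Prod>i<n. real ((2*i + 2*a) choose b) * inverse (real ((i + b) choose b)))"
    by (simp only: mid_factor_eq(2))
  have "det (mat n n (\<lambda>(i, j). real ((2*i) choose j)))
      = 2 ^ (n choose 2) * (\<Prod>i<n. mid_factor 0 0 i)"
    using det_binomial_even_rows[of n 0 0] by (simp only: mult_0_right add_0_right)
  also have "(\<Prod>i<n. mid_factor 0 0 i) = 1" by (simp add: mid_factor_def)
  finally have "det (mat n n (\<lambda>(i, j). real ((2*i) choose j))) = 2 ^ (n choose 2)" by simp
  with first_form second_form show ?thesis by (intro conjI)
qed

end
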